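(* Let $t$ be a positive integer and let $M$ be a matroid with the $(t,2t)$-property. Let $C_1^*,C_2^*,\dotsc,C_{t-1}^*$ be pairwise disjoint cocircuits of $M$, and let $Y = E(M)-\bigcup_{i \in \{1,\dots,t-1\}} C_i^*$. Then for every $y \in Y$ there is a $2t$-element circuit $C_y$ of $M$ containing $y$ such that either (i) $|C_y \cap C_i^*| = 2$ for all $i \in \{1,\dots,t-1\}$, or (ii) $|C_y \cap C_j^*| = 3$ for some $j \in \{1,\dots,t-1\}$, and $|C_y \cap C_i^*| = 2$ for all $i \in \{1,\dots,t-1\}-\{j\}$. Moreover, if $C_y = S \cup \{y\}$ (with $y\notin S$) satisfies (ii), then there are at most $3t-1$ elements $w \in Y$ such that $S \cup \{w\}$ is a circuit of $M$.
   Context: A matroid $M$ has the $(t,2t)$-property if every $t$-element subset of $E(M)$ is contained in both a $2t$-element circuit and a $2t$-element cocircuit of $M$. *)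

theory Defs
  imports Main
begin

definition matroid :: "'a set \<Rightarrow> ('a set \<Rightarrow> bool) \<Rightarrow> bool" where
  "matroid E indep \<longleftrightarrow>
     finite E \<and>
     indep {} \<and>
     (\<forall>X. indep X \<longrightarrow> X \<subseteq> E) \<and>
     (\<forall>X Y. indep X \<and> Y \<subseteq> X \<longrightarrow> indep Y) \<and>
     (\<forall>X Y. indep X \<and> indep Y \<and> card X < card Y \<longrightarrow>
        (\<exists>e \<in> Y - X. indep (insert e X)))"

definition basis :: "'a set \<Rightarrow> ('a set \<Rightarrow> bool) \<Rightarrow> 'a set \<Rightarrow> bool" where
  "basis E indep B \<longleftrightarrow> indep B \<and> (\<forall>X. indep X \<and> B \<subseteq> X \<longrightarrow> X = B)"

definition circuit :: "'a set \<Rightarrow> ('a set \<Rightarrow> bool) \<Rightarrow> 'a set \<Rightarrow> bool" where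
  "circuit E indep C \<longleftrightarrow> C \<subseteq> E \<and> \<not> indep C \<and> (\<forall>D. D \<subset> C \<longrightarrow> indep D)"

definition dual_indep :: "'a set \<Rightarrow> ('a set \<Rightarrow> bool) \<Rightarrow> 'a set \<Rightarrow> bool" where
  "dual_indep E indep X \<longleftrightarrow> (\<exists>B. basis E indep B \<and> X \<subseteq> E - B)"

definition cocircuit :: "'a set \<Rightarrow> ('a set \<Rightarrow> bool) \<Rightarrow> 'a set \<Rightarrow> bool" where
  "cocircuit E indep C \<longleftrightarrow> circuit E (dual_indep E indep) C"

definition t_2t_property :: "nat \<Rightarrow> 'a set \<Rightarrow> ('a set \<Rightarrow> bool) \<Rightarrow> bool" where
  "t_2t_property t E indep \<longleftrightarrow>
     (\<forall>X. X \<subseteq> E \<and> card X = t \<longrightarrow>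
        (\<exists>C. circuit E indep C \<and> X \<subseteq> C \<and> card C = 2 * t) \<and>
        (\<exists>D. cocircuit E indep D \<and> X \<subseteq> D \<and> card D = 2 * t))"

end

theory Submission
  imports Defs "HOL-Library.Disjoint_Sets"
begin

text \<open>
  The key tool is orthogonality: a circuit never meets a cocircuit in exactly one element.
  Adding \<open>y\<close> to one element of each \<open>C\<^sup>*\<^sub>i\<close> gives a \<open>t\<close>-set; the \<open>2t\<close>-circuit through it
  meets every \<open>C\<^sup>*\<^sub>i\<close>, hence in at least two elements, and only \<open>2t - 1\<close> elements besides \<open>y\<close>
  are available for the \<open>t - 1\<close> cocircuits.

  For the bound, \<open>S\<close> is independent, meets every \<open>C\<^sup>*\<^sub>i\<close>, and spans the set \<open>W\<close> of its
  completions. An independent \<open>Z \<subseteq> W\<close> extends inside \<open>S \<union> Z\<close> to an independent set of size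
  at most \<open>|S| = 2t - 1\<close>; if \<open>|Z| > t\<close>, the extension misses some \<open>C\<^sup>*\<^sub>i\<close>, and adding an element
  of \<open>S \<inter> C\<^sup>*\<^sub>i\<close> creates a circuit meeting \<open>C\<^sup>*\<^sub>i\<close> once. So \<open>W\<close> has rank at most \<open>t\<close>. Finally, if
  \<open>|W| \<ge> 3t\<close>, a \<open>2t\<close>-cocircuit \<open>D\<close> through \<open>t\<close> elements of \<open>W\<close> leaves \<open>t\<close> elements of \<open>W\<close>
  outside \<open>D\<close>; with one element of \<open>D \<inter> W\<close> they form a dependent set whose circuit, having
  more than \<open>t\<close> elements, meets \<open>D\<close> once.
\<close>

lemma matroid_finite: "matroid E indep \<Longrightarrow> finite E"
  by (simp add: matroid_def)

lemma matroid_indep_empty: "matroid E indep \<Longrightarrow> indep {}"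
  by (simp add: matroid_def)

lemma matroid_indep_subset: "matroid E indep \<Longrightarrow> indep X \<Longrightarrow> X \<subseteq> E"
  by (simp add: matroid_def)

lemma matroid_indep_mono: "matroid E indep \<Longrightarrow> indep X \<Longrightarrow> Y \<subseteq> X \<Longrightarrow> indep Y"
  unfolding matroid_def by blast

lemma matroid_augment:
  "matroid E indep \<Longrightarrow> indep X \<Longrightarrow> indep Y \<Longrightarrow> card X < card Y \<Longrightarrow>
    \<exists>e \<in> Y - X. indep (insert e X)"
  unfolding matroid_def by blast

lemma matroid_indep_finite: "matroid E indep \<Longrightarrow> indep X \<Longrightarrow> finite X"
  by (meson matroid_finite matroid_indep_subset finite_subset)

lemma circuit_subset: "circuit E indep C \<Longrightarrow> C \<subseteq> E"
  by (simp add: circuit_def)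

lemma circuit_dependent: "circuit E indep C \<Longrightarrow> \<not> indep C"
  by (simp add: circuit_def)

lemma circuit_psubset_indep: "circuit E indep C \<Longrightarrow> D \<subset> C \<Longrightarrow> indep D"
  by (simp add: circuit_def)

lemma indep_extend_maximal:
  assumes "indep I" "I \<subseteq> A" "finite A"
  obtains J where "I \<subseteq> J" "J \<subseteq> A" "indep J" "\<forall>x \<in> A - J. \<not> indep (insert x J)"
proof -
  let ?P = "\<lambda>J. I \<subseteq> J \<and> J \<subseteq> A \<and> indep J"
  have "?P I" using assms by simp
  moreover have "\<forall>J. ?P J \<longrightarrow> card J < Suc (card A)"
    using \<open>finite A\<close> by (auto intro: card_mono le_imp_less_Suc)
  ultimately obtain J where J: "?P J" and greatest: "\<forall>J'. ?P J' \<longrightarrow> card J' \<le> card J"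
    by (rule ex_has_greatest_nat[THEN exE]) blast
  have "finite J" using J \<open>finite A\<close> finite_subset by blast
  have "\<not> indep (insert x J)" if "x \<in> A - J" for x
  proof
    assume "indep (insert x J)"
    then have "card (insert x J) \<le> card J" using J that greatest by blast
    then show False using \<open>finite J\<close> that by simp
  qed
  then show thesis using J that by blast
qed

lemma basis_exists:
  assumes m: "matroid E indep"
  obtains B where "basis E indep B"
proof -
  obtain J where J: "indep J" "\<forall>x \<in> E - J. \<not> indep (insert x J)"
    using indep_extend_maximal[where indep = indep, OF matroid_indep_empty[OF m] empty_subsetI
        matroid_finite[OF m]]
    by metis
  have "X = J" if X: "indep X" "J \<subseteq> X" for X
  proof (rule ccontr)
    assume "X \<noteq> J"
    then obtain x where x: "x \<in> X" "x \<notin> J" using X(2) by blast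
    then have "x \<in> E" using matroid_indep_subset[OF m X(1)] by blast
    moreover have "indep (insert x J)" using matroid_indep_mono[OF m X(1)] x X(2) by simp
    ultimately show False using J(2) x(2) by blast
  qed
  then show thesis using J(1) that unfolding basis_def by blast
qed

lemma indep_card_le_basis:
  assumes m: "matroid E indep" and B: "basis E indep B" and "indep J"
  shows "card J \<le> card B"
proof (rule ccontr)
  assume "\<not> ?thesis"
  then obtain e where "e \<in> J - B" "indep (insert e B)"
    using matroid_augment[OF m _ \<open>indep J\<close>] B unfolding basis_def by (meson not_le)
  then show False using B unfolding basis_def by blast
qed

lemma basis_if_card_ge:
  assumes m: "matroid E indep" and B: "basis E indep B" and "indep J" and "card B \<le> card J"
  shows "basis E indep J"
  unfolding basis_def
proof (intro conjI allI impI)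
  fix X assume X: "indep X \<and> J \<subseteq> X"
  then have "finite X" using matroid_indep_finite[OF m] by blast
  moreover have "card X \<le> card J"
    using indep_card_le_basis[OF m B] X \<open>card B \<le> card J\<close> by fastforce
  ultimately show "X = J" using X card_subset_eq card_mono by (metis antisym)
qed fact

lemma dependent_contains_circuit:
  assumes m: "matroid E indep" and "X \<subseteq> E" "\<not> indep X"
  obtains C where "C \<subseteq> X" "circuit E indep C"
proof -
  have "finite X" using assms matroid_finite finite_subset by blast
  then have "\<exists>C \<subseteq> X. circuit E indep C" using assms(2,3)
  proof (induction X rule: finite_psubset_induct)
    case (psubset X)
    show ?case
    proof (cases "\<forall>D. D \<subset> X \<longrightarrow> indep D")
      case True
      then show ?thesis using psubset.prems unfolding circuit_def by blast
    next
      case False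
      then obtain D where "D \<subset> X" "\<not> indep D" by blast
      then show ?thesis using psubset.IH[of D] psubset.prems by blast
    qed
  qed
  then show thesis using that by blast
qed

lemma circuit_through_element:
  assumes m: "matroid E indep" and "indep J" "s \<in> E" "\<not> indep (insert s J)"
  obtains C where "C \<subseteq> insert s J" "circuit E indep C" "s \<in> C"
proof -
  have "insert s J \<subseteq> E" using assms matroid_indep_subset by blast
  then obtain C where C: "C \<subseteq> insert s J" "circuit E indep C"
    using dependent_contains_circuit[OF m _ assms(4)] by blast
  have "s \<in> C"
  proof (rule ccontr)
    assume "s \<notin> C"
    then have "indep C" using C matroid_indep_mono[OF m \<open>indep J\<close>] by blast
    then show False using circuit_dependent[OF C(2)] by blast
  qed
  then show thesis using C that by blast
qed

lemma cocircuit_subset: "cocircuit E indep D \<Longrightarrow> D \<subseteq> E"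
  unfolding cocircuit_def by (rule circuit_subset)

lemma cocircuit_nonempty:
  assumes m: "matroid E indep" and "cocircuit E indep D"
  shows "D \<noteq> {}"
proof
  assume "D = {}"
  obtain B where "basis E indep B" using basis_exists[OF m] .
  then have "dual_indep E indep D" unfolding dual_indep_def \<open>D = {}\<close> by blast
  then show False using assms(2) unfolding cocircuit_def by (simp add: circuit_dependent)
qed

lemma circuit_cocircuit_inter_not_singleton:
  assumes m: "matroid E indep" and C: "circuit E indep C" and D: "cocircuit E indep D"
  shows "C \<inter> D \<noteq> {e}"
proof
  assume e: "C \<inter> D = {e}"
  have D_dep: "\<not> dual_indep E indep D"
    using D unfolding cocircuit_def by (rule circuit_dependent)
  have "dual_indep E indep (D - {e})"
    using D e unfolding cocircuit_def by (intro circuit_psubset_indep) blast+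
  then obtain B where B: "basis E indep B" "D - {e} \<subseteq> E - B"
    unfolding dual_indep_def by blast
  have C_indep: "indep (C - {e})" using C e by (intro circuit_psubset_indep) blast+
  have "finite (C - {e} \<union> B)"
    using B(1) circuit_subset[OF C] matroid_finite[OF m] matroid_indep_finite[OF m]
    unfolding basis_def by (meson finite_Diff finite_Un finite_subset)
  then obtain J where J: "C - {e} \<subseteq> J" "J \<subseteq> C - {e} \<union> B" "indep J"
      "\<forall>x \<in> (C - {e} \<union> B) - J. \<not> indep (insert x J)"
    using indep_extend_maximal[where indep = indep, OF C_indep Un_upper1] by metis
  \<comment> \<open>\<open>J\<close> turns out to be a basis disjoint from \<open>D\<close>, so \<open>D\<close> would be independent in the dual.\<close>
  have "card B \<le> card J"
  proof (rule ccontr)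
    assume "\<not> ?thesis"
    then obtain b where "b \<in> B - J" "indep (insert b J)"
      using matroid_augment[OF m J(3)] B(1) unfolding basis_def by (meson not_le)
    then show False using J(4) by blast
  qed
  then have J_basis: "basis E indep J" using basis_if_card_ge[OF m B(1) J(3)] by blast
  have "e \<notin> J"
    using J(1,3) e circuit_dependent[OF C] matroid_indep_mono[OF m J(3), of C] by blast
  then have "D \<subseteq> E - J" using J(2) e B(2) cocircuit_subset[OF D] by blast
  then show False using J_basis D_dep unfolding dual_indep_def by blast
qed

lemma circuit_cocircuit_inter_card_ge_2:
  assumes "matroid E indep" "circuit E indep C" "cocircuit E indep D" "C \<inter> D \<noteq> {}"
  shows "2 \<le> card (C \<inter> D)"
proof -
  have "finite C" using circuit_subset[OF assms(2)] matroid_finite[OF assms(1)] by (rule finite_subset)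
  then have "card (C \<inter> D) \<noteq> 0" using assms(4) by simp
  moreover have "card (C \<inter> D) \<noteq> 1"
    using circuit_cocircuit_inter_not_singleton[OF assms(1-3)] by (metis card_1_singletonE)
  ultimately show ?thesis by linarith
qed

lemma t_2t_circuit_card_gt:
  assumes m: "matroid E indep" and p: "t_2t_property t E indep" and "t \<ge> 1"
    and C: "circuit E indep C" and "t \<le> card E"
  shows "t < card C"
proof (rule ccontr)
  assume "\<not> ?thesis"
  then have "card C \<le> t" by simp
  have fin: "finite E" "finite C"
    using matroid_finite[OF m] circuit_subset[OF C] by (auto intro: finite_subset)
  have "t - card C \<le> card (E - C)"
    using \<open>t \<le> card E\<close> \<open>card C \<le> t\<close> card_Diff_subset[OF fin(2) circuit_subset[OF C]] by simp
  then obtain R where R: "R \<subseteq> E - C" "card R = t - card C" "finite R"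
    by (rule obtain_subset_with_card_n)
  then have "card (C \<union> R) = t" "C \<union> R \<subseteq> E"
    using \<open>card C \<le> t\<close> fin card_Un_disjoint[of C R] circuit_subset[OF C] by auto
  then obtain C' where C': "circuit E indep C'" "C \<union> R \<subseteq> C'" "card C' = 2 * t"
    using p unfolding t_2t_property_def by blast
  then have "C \<subset> C'" using \<open>card C \<le> t\<close> \<open>t \<ge> 1\<close> by auto
  then show False using circuit_psubset_indep[OF C'(1)] circuit_dependent[OF C] by blast
qed

lemma disjoint_family_representatives:
  assumes "disjoint_family_on A I" "\<forall>i \<in> I. B \<inter> A i \<noteq> {}"
  obtains f where "inj_on f I" "\<forall>i \<in> I. f i \<in> B \<inter> A i"
proof -
  have "\<forall>i \<in> I. \<exists>x. x \<in> B \<inter> A i" using assms(2) by blast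
  then have "\<exists>f. \<forall>i \<in> I. f i \<in> B \<inter> A i" by (rule bchoice)
  then obtain f where f: "\<forall>i \<in> I. f i \<in> B \<inter> A i" ..
  have "inj_on f I"
  proof (rule inj_onI)
    fix i k assume i: "i \<in> I" and k: "k \<in> I" and "f i = f k"
    then have "f i \<in> A i \<inter> A k" using f by auto
    then show "i = k" using disjoint_family_onD[OF assms(1) i k] by auto
  qed
  then show thesis using f that by blast
qed

lemma card_le_if_meets_disjoint_family:
  assumes "finite B" "disjoint_family_on A I" "\<forall>i \<in> I. B \<inter> A i \<noteq> {}"
  shows "card I \<le> card B"
proof -
  obtain f where "inj_on f I" "\<forall>i \<in> I. f i \<in> B \<inter> A i"
    using disjoint_family_representatives[OF assms(2,3)] .
  then show ?thesis using card_inj_on_le[of f I B] \<open>finite B\<close> by auto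
qed

lemma all_two_or_one_three_if_sum_le:
  fixes g :: "'i \<Rightarrow> nat"
  assumes "finite I" "\<forall>i \<in> I. 2 \<le> g i" "sum g I \<le> 2 * card I + 1"
  shows "(\<forall>i \<in> I. g i = 2) \<or> (\<exists>j \<in> I. g j = 3 \<and> (\<forall>i \<in> I - {j}. g i = 2))"
proof -
  have "\<exists>j \<in> I. g j = 3 \<and> (\<forall>i \<in> I - {j}. g i = 2)" if not_all: "\<not> (\<forall>i \<in> I. g i = 2)"
  proof -
    obtain j where j: "j \<in> I" "3 \<le> g j" using not_all assms(2) by fastforce
    let ?I' = "I - {j}"
    have "sum g I = g j + sum g ?I'" using sum.remove[OF assms(1) j(1)] .
    moreover have "sum (\<lambda>_. 2) ?I' \<le> sum g ?I'" using assms(2) by (intro sum_mono) auto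
    moreover have "card ?I' + 1 = card I"
      using card_Suc_Diff1[OF assms(1) j(1)] by simp
    ultimately have "g j = 3" and sum_eq: "sum (\<lambda>_. 2) ?I' = sum g ?I'"
      using assms(3) j(2) by auto
    moreover have "g i = 2" if "i \<in> ?I'" for i
      using sum_mono_inv[OF sum_eq _ that] assms(1,2) that by fastforce
    ultimately show ?thesis using j(1) by blast
  qed
  then show ?thesis by blast
qed

lemma t_2t_circuit_meets_disjoint_cocircuits:
  assumes m: "matroid E indep" and p: "t_2t_property t E indep" and "t \<ge> 1"
    and I: "finite I" "card I = t - 1"
    and Cs: "disjoint_family_on Cs I" "\<forall>i \<in> I. cocircuit E indep (Cs i)"
    and y: "y \<in> E" "\<forall>i \<in> I. y \<notin> Cs i"
  shows "\<exists>C. circuit E indep C \<and> card C = 2 * t \<and> y \<in> C \<and>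
           ((\<forall>i \<in> I. card (C \<inter> Cs i) = 2) \<or>
            (\<exists>j \<in> I. card (C \<inter> Cs j) = 3 \<and> (\<forall>i \<in> I - {j}. card (C \<inter> Cs i) = 2)))"
proof -
  have "\<forall>i \<in> I. E \<inter> Cs i \<noteq> {}"
    using Cs(2) cocircuit_nonempty[OF m] cocircuit_subset by (metis inf.absorb2)
  then obtain f where f: "inj_on f I" "\<forall>i \<in> I. f i \<in> E \<inter> Cs i"
    using disjoint_family_representatives[OF Cs(1)] by blast
  let ?X = "insert y (f ` I)"
  have "y \<notin> f ` I" using f(2) y(2) by auto
  then have "card ?X = t" using f(1) I \<open>t \<ge> 1\<close> by (simp add: card_image)
  moreover have "?X \<subseteq> E" using f(2) y(1) by auto
  ultimately obtain C where C: "circuit E indep C" "?X \<subseteq> C" "card C = 2 * t"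
    using p unfolding t_2t_property_def by blast
  have "finite C" using C(3) \<open>t \<ge> 1\<close> card_gt_0_iff by fastforce
  have ge2: "\<forall>i \<in> I. 2 \<le> card (C \<inter> Cs i)"
  proof
    fix i assume "i \<in> I"
    then have "f i \<in> C \<inter> Cs i" using f(2) C(2) by auto
    then show "2 \<le> card (C \<inter> Cs i)"
      using circuit_cocircuit_inter_card_ge_2[OF m C(1)] Cs(2) \<open>i \<in> I\<close> by blast
  qed
  have "(\<Sum>i \<in> I. card (C \<inter> Cs i)) = card (\<Union>i \<in> I. C \<inter> Cs i)"
    using \<open>finite C\<close> Cs(1) I(1) unfolding disjoint_family_on_def
    by (intro card_UN_disjoint[symmetric]) auto
  also have "\<dots> \<le> card (C - {y})" using \<open>finite C\<close> y(2) by (intro card_mono) auto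
  also have "\<dots> = 2 * card I + 1" using C(2,3) I(2) \<open>t \<ge> 1\<close> by simp
  finally show ?thesis
    using all_two_or_one_three_if_sum_le[OF I(1) ge2] C by blast
qed

lemma indep_card_le_if_spanned:
  assumes m: "matroid E indep" and "indep S" and spans: "\<forall>w \<in> W. \<not> indep (insert w S)"
    and "indep J" "J \<subseteq> S \<union> W"
  shows "card J \<le> card S"
proof (rule ccontr)
  assume "\<not> ?thesis"
  then obtain e where "e \<in> J - S" "indep (insert e S)"
    using matroid_augment[OF m \<open>indep S\<close> \<open>indep J\<close>] by (meson not_le)
  then show False using spans \<open>J \<subseteq> S \<union> W\<close> by blast
qed

lemma card_spanned_indep_le:
  assumes m: "matroid E indep"
    and Cs: "disjoint_family_on Cs I" "\<forall>i \<in> I. cocircuit E indep (Cs i)"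
    and S: "indep S" "\<forall>i \<in> I. S \<inter> Cs i \<noteq> {}"
    and W: "\<forall>w \<in> W. \<not> indep (insert w S)" "\<forall>i \<in> I. W \<inter> Cs i = {}"
    and Z: "indep Z" "Z \<subseteq> W"
  shows "card Z + card I \<le> card S"
proof (rule ccontr)
  assume too_big: "\<not> card Z + card I \<le> card S"
  have "finite (Z \<union> S)" using Z(1) S(1) matroid_indep_finite[OF m] by blast
  then obtain J where J: "Z \<subseteq> J" "J \<subseteq> Z \<union> S" "indep J"
      "\<forall>x \<in> (Z \<union> S) - J. \<not> indep (insert x J)"
    using indep_extend_maximal[where indep = indep, OF Z(1) Un_upper1] by metis
  have "card J \<le> card S" using indep_card_le_if_spanned[OF m S(1) W(1) J(3)] J(2) Z(2) by blast
  moreover have "finite J" using matroid_indep_finite[OF m J(3)] .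
  moreover have "card (J - Z) = card J - card Z" "card Z \<le> card J"
    using card_Diff_subset[OF finite_subset[OF J(1)] J(1)] card_mono[OF _ J(1)] \<open>finite J\<close> by auto
  ultimately have "card (J - Z) < card I" using too_big by linarith
  then obtain i where i: "i \<in> I" "(J - Z) \<inter> Cs i = {}"
    using card_le_if_meets_disjoint_family[OF _ Cs(1), of "J - Z"] \<open>finite J\<close>
    by (meson finite_Diff not_le)
  \<comment> \<open>Adding an element of \<open>S \<inter> Cs i\<close> to \<open>J\<close> creates a circuit meeting \<open>Cs i\<close> only there.\<close>
  have J_avoids: "J \<inter> Cs i = {}" using i W(2) Z(2) by blast
  obtain s where s: "s \<in> S" "s \<in> Cs i" using S(2) i(1) by blast
  then have "\<not> indep (insert s J)" using J(4) J_avoids by blast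
  then obtain C where C: "C \<subseteq> insert s J" "circuit E indep C" "s \<in> C"
    using circuit_through_element[OF m J(3)] s(1) matroid_indep_subset[OF m S(1)] by blast
  have "C \<inter> Cs i = {s}" using C(1,3) s(2) J_avoids by blast
  then show False using circuit_cocircuit_inter_not_singleton[OF m C(2)] Cs(2) i(1) by blast
qed

lemma t_2t_card_lt_if_rank_le:
  assumes m: "matroid E indep" and p: "t_2t_property t E indep" and "t \<ge> 1"
    and "W \<subseteq> E" and rank: "\<forall>Z \<subseteq> W. indep Z \<longrightarrow> card Z \<le> t"
  shows "card W < 3 * t"
proof (rule ccontr)
  assume "\<not> card W < 3 * t"
  then have "t \<le> card W" by linarith
  then obtain X where X: "X \<subseteq> W" "card X = t" "finite X"
    by (rule obtain_subset_with_card_n)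
  moreover have "X \<subseteq> E" using X(1) \<open>W \<subseteq> E\<close> by blast
  ultimately obtain D where D: "cocircuit E indep D" "X \<subseteq> D" "card D = 2 * t"
    using p unfolding t_2t_property_def by blast
  have "finite W" using \<open>W \<subseteq> E\<close> matroid_finite[OF m] by (rule finite_subset)
  have "finite D" using D(3) \<open>t \<ge> 1\<close> card_gt_0_iff by fastforce
  have "card (W \<inter> D) \<le> card D" using \<open>finite D\<close> by (intro card_mono) auto
  then have "t \<le> card (W - D)"
    using card_Diff_subset_Int[of W D] \<open>finite W\<close> D(3) \<open>\<not> card W < 3 * t\<close> by simp
  then obtain Z where Z: "Z \<subseteq> W - D" "card Z = t" "finite Z"
    by (rule obtain_subset_with_card_n)
  obtain x where x: "x \<in> X" using X(2) \<open>t \<ge> 1\<close> by fastforce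
  \<comment> \<open>A circuit inside the dependent set \<open>insert x Z\<close> has more than \<open>t\<close> elements, so it meets \<open>D\<close> exactly in \<open>x\<close>.\<close>
  have xZ: "insert x Z \<subseteq> W" using x X(1) Z(1) by blast
  have "x \<notin> Z" using x D(2) Z(1) by blast
  then have "card (insert x Z) = t + 1" using Z(2,3) by simp
  moreover have "card (insert x Z) \<le> t" if "indep (insert x Z)" using rank xZ that by blast
  ultimately have "\<not> indep (insert x Z)" by linarith
  then obtain C where C: "C \<subseteq> insert x Z" "circuit E indep C"
    using dependent_contains_circuit[OF m] xZ \<open>W \<subseteq> E\<close> by blast
  have "t \<le> card E"
    using \<open>t \<le> card W\<close> card_mono[OF matroid_finite[OF m] \<open>W \<subseteq> E\<close>] by linarith
  then have "t < card C" using t_2t_circuit_card_gt[OF m p \<open>t \<ge> 1\<close> C(2)] by blast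
  moreover have "card C \<le> t" if "x \<notin> C"
    using that C(1) Z(2) card_mono[OF Z(3), of C] by blast
  ultimately have "C \<inter> D = {x}" using C(1) x D(2) Z(1) by fastforce
  then show False using circuit_cocircuit_inter_not_singleton[OF m C(2) D(1)] by blast
qed

lemma t_2t_card_dependent_extensions_lt:
  assumes m: "matroid E indep" and p: "t_2t_property t E indep" and "t \<ge> 1"
    and Cs: "disjoint_family_on Cs I" "\<forall>i \<in> I. cocircuit E indep (Cs i)" "card I = t - 1"
    and S: "indep S" "card S = 2 * t - 1" "\<forall>i \<in> I. S \<inter> Cs i \<noteq> {}"
    and Y: "Y \<subseteq> E" "\<forall>i \<in> I. Y \<inter> Cs i = {}"
  shows "card {w \<in> Y. \<not> indep (insert w S)} < 3 * t"
proof (rule t_2t_card_lt_if_rank_le[OF m p \<open>t \<ge> 1\<close>])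
  let ?W = "{w \<in> Y. \<not> indep (insert w S)}"
  show "?W \<subseteq> E" using Y(1) by blast
  have W: "\<forall>w \<in> ?W. \<not> indep (insert w S)" "\<forall>i \<in> I. ?W \<inter> Cs i = {}" using Y(2) by auto
  show "\<forall>Z \<subseteq> ?W. indep Z \<longrightarrow> card Z \<le> t"
  proof (intro allI impI)
    fix Z assume "Z \<subseteq> ?W" "indep Z"
    then have "card Z + card I \<le> card S" by (rule card_spanned_indep_le[OF m Cs(1,2) S(1,3) W, rotated])
    then show "card Z \<le> t" using Cs(3) S(2) \<open>t \<ge> 1\<close> by linarith
  qed
qed

theorem lemma5p3:
  fixes t :: nat and E :: "'a set" and indep :: "'a set \<Rightarrow> bool"
    and Cs :: "nat \<Rightarrow> 'a set" and Y :: "'a set"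
  assumes "t \<ge> 1"
    and "matroid E indep"
    and "t_2t_property t E indep"
    and "\<forall>i \<in> {1..t-1}. cocircuit E indep (Cs i)"
    and "\<forall>i \<in> {1..t-1}. \<forall>j \<in> {1..t-1}. i \<noteq> j \<longrightarrow> Cs i \<inter> Cs j = {}"
    and "Y = E - (\<Union>i \<in> {1..t-1}. Cs i)"
  shows "(\<forall>y \<in> Y. \<exists>C. circuit E indep C \<and> card C = 2 * t \<and> y \<in> C \<and>
            ((\<forall>i \<in> {1..t-1}. card (C \<inter> Cs i) = 2) \<or>
             (\<exists>j \<in> {1..t-1}. card (C \<inter> Cs j) = 3 \<and>
                (\<forall>i \<in> {1..t-1} - {j}. card (C \<inter> Cs i) = 2))))
    \<and> (\<forall>y \<in> Y. \<forall>S. y \<notin> S \<longrightarrow> circuit E indep (S \<union> {y}) \<longrightarrow> card (S \<union> {y}) = 2 * t \<longrightarrow>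
          (\<exists>j \<in> {1..t-1}. card ((S \<union> {y}) \<inter> Cs j) = 3 \<and>
             (\<forall>i \<in> {1..t-1} - {j}. card ((S \<union> {y}) \<inter> Cs i) = 2)) \<longrightarrow>
          card {w \<in> Y. circuit E indep (S \<union> {w})} \<le> 3 * t - 1)"
proof -
  let ?I = "{1..t-1}"
  have I: "finite ?I" "card ?I = t - 1" by auto
  have fam: "disjoint_family_on Cs ?I" using assms(5) unfolding disjoint_family_on_def .
  have Y: "Y \<subseteq> E" "\<forall>i \<in> ?I. Y \<inter> Cs i = {}" using assms(6) by auto
  show ?thesis
  proof (intro conjI ballI allI impI, goal_cases)
    case (1 y)
    then show ?case
      using t_2t_circuit_meets_disjoint_cocircuits[OF assms(2,3,1) I fam assms(4)] Y by blast
  next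
    case (2 y S)
    then have "indep S" using circuit_psubset_indep by blast
    then have "card S = 2 * t - 1" using 2 matroid_indep_finite[OF assms(2)] by simp
    have "S \<inter> Cs i \<noteq> {}" if "i \<in> ?I" for i
    proof -
      obtain j where "card ((S \<union> {y}) \<inter> Cs j) = 3"
        and "\<forall>i \<in> ?I - {j}. card ((S \<union> {y}) \<inter> Cs i) = 2"
        using 2(5) by blast
      then have "card ((S \<union> {y}) \<inter> Cs i) \<noteq> 0" using that by (cases "i = j") auto
      then have "(S \<union> {y}) \<inter> Cs i \<noteq> {}" by force
      then show ?thesis using Y(2) 2(1) that by blast
    qed
    then have "card {w \<in> Y. \<not> indep (insert w S)} < 3 * t"
      using t_2t_card_dependent_extensions_lt[OF assms(2,3,1) fam assms(4) I(2)] Y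
        \<open>indep S\<close> \<open>card S = 2 * t - 1\<close> by blast
    moreover have "card {w \<in> Y. circuit E indep (S \<union> {w})} \<le> card {w \<in> Y. \<not> indep (insert w S)}"
      using Y(1) matroid_finite[OF assms(2)] circuit_dependent
      by (intro card_mono) (auto intro: finite_subset)
    ultimately show ?case by linarith
  qed
qed

end
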